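(* Let $h:(\mathbb{R}^n,0)\to(\mathbb{R}^n,0)$ be a bi-Lipschitz homeomorphism germ, and let $U,V\subset\mathbb{R}^n$ be closed cones with vertex $0$. Suppose that $h(U)$ satisfies condition (SSP). Then $D(h(U\cap V))=D(h(U))\cap D(h(V))$.
   Context: A cone with vertex $0$ is a set $C\subset\mathbb{R}^n$ with $tC\subseteq C$ for all $t\ge0$. For a set-germ $A\subset\mathbb{R}^n$ at $0$, $D(A)=\{a\in S^{n-1}:\exists\, x_i\in A\setminus\{0\},\ x_i\to0,\ x_i/\|x_i\|\to a\}$. For sequences, $\|u_m\|\ll\|v_m\|,\|w_m\|$ means $\|u_m\|/\|v_m\|\to0$ and $\|u_m\|/\|w_m\|\to0$. $A$ satisfies condition (SSP) if for every sequence $a_m\in\mathbb{R}^n$ tending to $0$ with $\lim a_m/\|a_m\|\in D(A)$ there is a sequence $b_m\in A$ with $\|a_m-b_m\|\ll\|a_m\|,\|b_m\|$. A bi-Lipschitz homeomorphism germ is a homeomorphism germ $h$ with $h(0)=0$ and constants $0<K_1\le K_2$ with $K_1\|x-y\|\le\|h(x)-h(y)\|\le K_2\|x-y\|$ near $0$. *)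

theory Defs
  imports "HOL-Analysis.Analysis"
begin

definition is_cone :: "'a::real_vector set \<Rightarrow> bool" where
  "is_cone C \<longleftrightarrow> (\<forall>t::real. t \<ge> 0 \<longrightarrow> (\<forall>x\<in>C. t *\<^sub>R x \<in> C))"

definition tangent_dirs :: "'a::real_normed_vector set \<Rightarrow> 'a set" where
  "tangent_dirs A = {a. norm a = 1 \<and>
     (\<exists>x::nat \<Rightarrow> 'a. (\<forall>i. x i \<in> A - {0}) \<and> x \<longlonglongrightarrow> 0 \<and>
        (\<lambda>i. x i /\<^sub>R norm (x i)) \<longlonglongrightarrow> a)}"

definition SSP :: "'a::real_normed_vector set \<Rightarrow> bool" where
  "SSP A \<longleftrightarrow> (\<forall>a::nat \<Rightarrow> 'a. a \<longlonglongrightarrow> 0 \<and>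
      (\<exists>d\<in>tangent_dirs A. (\<lambda>m. a m /\<^sub>R norm (a m)) \<longlonglongrightarrow> d) \<longrightarrow>
      (\<exists>b::nat \<Rightarrow> 'a. (\<forall>m. b m \<in> A) \<and>
         (\<lambda>m. norm (a m - b m) / norm (a m)) \<longlonglongrightarrow> 0 \<and>
         (\<lambda>m. norm (a m - b m) / norm (b m)) \<longlonglongrightarrow> 0))"

text \<open>h is a bi-Lipschitz homeomorphism germ (R^n,0) -> (R^n,0), represented on the
  ball of radius \<delta> around 0, with constants K1, K2.\<close>
definition bi_lipschitz_germ :: "('a::euclidean_space \<Rightarrow> 'a) \<Rightarrow> real \<Rightarrow> real \<Rightarrow> real \<Rightarrow> bool" where
  "bi_lipschitz_germ h \<delta> K1 K2 \<longleftrightarrow> \<delta> > 0 \<and> 0 < K1 \<and> K1 \<le> K2 \<and> h 0 = 0 \<and>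
     continuous_on (ball 0 \<delta>) h \<and> inj_on h (ball 0 \<delta>) \<and> open (h ` ball 0 \<delta>) \<and>
     (\<forall>x\<in>ball 0 \<delta>. \<forall>y\<in>ball 0 \<delta>.
        K1 * norm (x - y) \<le> norm (h x - h y) \<and> norm (h x - h y) \<le> K2 * norm (x - y))"

end

theory Submission
  imports Defs
begin

text \<open>
  Let \<open>a\<close> be a common direction of \<open>h(U)\<close> and \<open>h(V)\<close>, realised by \<open>y\<^sub>i = h(v\<^sub>i)\<close> with \<open>v\<^sub>i \<in> V\<close>.
  (SSP) yields \<open>h(u\<^sub>i) \<in> h(U)\<close> with \<open>\<parallel>y\<^sub>i - h(u\<^sub>i)\<parallel> \<ll> \<parallel>y\<^sub>i\<parallel>\<close>, and bi-Lipschitz continuity pulls this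
  back to \<open>\<parallel>v\<^sub>i - u\<^sub>i\<parallel> \<ll> \<parallel>v\<^sub>i\<parallel>\<close>. A limit direction \<open>w\<close> of the \<open>v\<^sub>i\<close> is then a limit direction of
  the \<open>u\<^sub>i\<close> as well, so \<open>w \<in> U \<inter> V\<close> since both are closed cones. The points \<open>z\<^sub>i = \<parallel>v\<^sub>i\<parallel> w\<close> lie
  in \<open>U \<inter> V\<close> and satisfy \<open>\<parallel>v\<^sub>i - z\<^sub>i\<parallel> \<ll> \<parallel>v\<^sub>i\<parallel>\<close>; pushing this forward by \<open>h\<close> shows that
  \<open>h(z\<^sub>i)\<close> has the same limit direction \<open>a\<close> as \<open>y\<^sub>i\<close>.
\<close>

text \<open>The relation \<open>\<parallel>p\<^sub>m - q\<^sub>m\<parallel> \<ll> \<parallel>p\<^sub>m\<parallel>\<close> of the paper; it is only meaningful where \<open>p\<^sub>m \<noteq> 0\<close>.\<close>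
definition relatively_close :: "(nat \<Rightarrow> 'a::real_normed_vector) \<Rightarrow> (nat \<Rightarrow> 'a) \<Rightarrow> bool" where
  "relatively_close p q \<longleftrightarrow> (\<lambda>i. norm (p i - q i) / norm (p i)) \<longlonglongrightarrow> 0"

lemma relatively_close_comparison:
  assumes "relatively_close p p'"
    and "\<And>i. norm (q i - q' i) / norm (q i) \<le> C * (norm (p i - p' i) / norm (p i))"
  shows "relatively_close q q'"
  unfolding relatively_close_def
proof (rule Lim_null_comparison)
  show "\<forall>\<^sub>F i in sequentially. norm (norm (q i - q' i) / norm (q i)) \<le> C * (norm (p i - p' i) / norm (p i))"
    using assms(2) by simp
  show "(\<lambda>i. C * (norm (p i - p' i) / norm (p i))) \<longlonglongrightarrow> 0"
    using tendsto_mult_right_zero assms(1) unfolding relatively_close_def by blast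
qed

lemma relatively_close_subseq:
  "relatively_close p q \<Longrightarrow> strict_mono r \<Longrightarrow> relatively_close (p \<circ> r) (q \<circ> r)"
  unfolding relatively_close_def using LIMSEQ_subseq_LIMSEQ by (fastforce simp: o_def)

lemma relatively_close_tendsto_zero:
  assumes "\<And>i. p i \<noteq> 0" and "p \<longlonglongrightarrow> 0" and "relatively_close p q"
  shows "q \<longlonglongrightarrow> 0"
proof -
  have "(\<lambda>i. norm (p i - q i) / norm (p i) * norm (p i)) \<longlonglongrightarrow> 0"
    using tendsto_mult[OF assms(3)[unfolded relatively_close_def] tendsto_norm_zero[OF assms(2)]]
    by simp
  then have "(\<lambda>i. norm (p i - q i)) \<longlonglongrightarrow> 0"
    using assms(1) by simp
  then have "(\<lambda>i. p i - q i) \<longlonglongrightarrow> 0"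
    by (rule tendsto_norm_zero_cancel)
  from tendsto_diff[OF assms(2) this] show ?thesis by simp
qed

lemma norm_direction_diff_le:
  fixes p q :: "'a::real_normed_vector"
  assumes "p \<noteq> 0"
  shows "norm (q /\<^sub>R norm q - p /\<^sub>R norm p) \<le> 2 * (norm (q - p) / norm p)"
proof (cases "q = 0")
  case True
  then show ?thesis using assms by simp
next
  case False
  have np: "norm p > 0" and nq: "norm q > 0" using assms False by simp_all
  have "q /\<^sub>R norm q - p /\<^sub>R norm p = (q - p) /\<^sub>R norm p + (inverse (norm q) - inverse (norm p)) *\<^sub>R q"
    by (simp add: algebra_simps)
  then have "norm (q /\<^sub>R norm q - p /\<^sub>R norm p)
      \<le> norm ((q - p) /\<^sub>R norm p) + norm ((inverse (norm q) - inverse (norm p)) *\<^sub>R q)"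
    by (simp only: norm_triangle_ineq)
  also have "norm ((inverse (norm q) - inverse (norm p)) *\<^sub>R q) = \<bar>norm p - norm q\<bar> / norm p"
    using np nq by (simp add: field_simps abs_divide abs_mult)
  also have "\<dots> \<le> norm (q - p) / norm p"
    using np norm_triangle_ineq3[of p q] by (simp add: divide_right_mono norm_minus_commute)
  finally show ?thesis
    by (simp add: divide_inverse_commute)
qed

lemma relatively_close_directions:
  assumes "\<And>i. p i \<noteq> 0" and "relatively_close p q" and "(\<lambda>i. p i /\<^sub>R norm (p i)) \<longlonglongrightarrow> a"
  shows "(\<lambda>i. q i /\<^sub>R norm (q i)) \<longlonglongrightarrow> a"
proof -
  have "(\<lambda>i. q i /\<^sub>R norm (q i) - p i /\<^sub>R norm (p i)) \<longlonglongrightarrow> 0"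
  proof (rule Lim_null_comparison)
    have "norm (q i /\<^sub>R norm (q i) - p i /\<^sub>R norm (p i)) \<le> 2 * (norm (p i - q i) / norm (p i))" for i
      using norm_direction_diff_le[OF assms(1)[of i], of "q i"] by (simp only: norm_minus_commute[of "q i"])
    then show "\<forall>\<^sub>F i in sequentially. norm (q i /\<^sub>R norm (q i) - p i /\<^sub>R norm (p i))
        \<le> 2 * (norm (p i - q i) / norm (p i))"
      by simp
    show "(\<lambda>i. 2 * (norm (p i - q i) / norm (p i))) \<longlonglongrightarrow> 0"
      using tendsto_mult_right_zero assms(2) unfolding relatively_close_def by blast
  qed
  from tendsto_add[OF this assms(3)] show ?thesis by simp
qed

lemma tangent_dirs_mono: "A \<subseteq> B \<Longrightarrow> tangent_dirs A \<subseteq> tangent_dirs B"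
  unfolding tangent_dirs_def by blast

lemma tangent_dirs_relatively_close:
  assumes "\<And>i. p i \<noteq> 0" and "p \<longlonglongrightarrow> 0" and "(\<lambda>i. p i /\<^sub>R norm (p i)) \<longlonglongrightarrow> a" and "norm a = 1"
    and "\<And>i. q i \<in> A - {0}" and "relatively_close p q"
  shows "a \<in> tangent_dirs A"
  unfolding tangent_dirs_def
  using assms relatively_close_tendsto_zero relatively_close_directions by blast

lemma closed_cone_scaled_limit:
  assumes "closed C" and "is_cone C" and "\<And>i. x i \<in> C" and "\<And>i. c i \<ge> 0"
    and "(\<lambda>i. c i *\<^sub>R x i) \<longlonglongrightarrow> w"
  shows "w \<in> C"
proof (rule closed_sequentially[OF assms(1) _ assms(5)])
  show "c i *\<^sub>R x i \<in> C" for i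
    using assms(2-4) unfolding is_cone_def by blast
qed

lemma closed_cones_common_direction:
  fixes u v :: "nat \<Rightarrow> 'a::{real_normed_vector,heine_borel}"
  assumes "closed U" "is_cone U" "closed V" "is_cone V"
    and "\<And>i. u i \<in> U" and "\<And>i. v i \<in> V" and "\<And>i. v i \<noteq> 0" and "relatively_close v u"
  obtains w r where "w \<in> U \<inter> V" "norm w = 1" "strict_mono r"
    "relatively_close (v \<circ> r) (\<lambda>i. norm (v (r i)) *\<^sub>R w)"
proof -
  have "bounded (range (\<lambda>i. v i /\<^sub>R norm (v i)))"
    by (rule boundedI[of _ 1]) (auto simp: assms(7))
  then obtain w r where r: "strict_mono r" and "((\<lambda>i. v i /\<^sub>R norm (v i)) \<circ> r) \<longlonglongrightarrow> w"
    using bounded_imp_convergent_subsequence by blast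
  then have w: "(\<lambda>i. v (r i) /\<^sub>R norm (v (r i))) \<longlonglongrightarrow> w"
    by (simp add: o_def)
  have "(\<lambda>i. norm (v (r i) /\<^sub>R norm (v (r i)))) = (\<lambda>i. 1)"
    using assms(7) by simp
  with tendsto_norm[OF w] have "norm w = 1"
    using LIMSEQ_unique tendsto_const by metis
  have "w \<in> V"
    by (rule closed_cone_scaled_limit[OF assms(3,4) assms(6) _ w]) simp
  have "(\<lambda>i. norm (v (r i) - u (r i)) / norm (v (r i))) \<longlonglongrightarrow> 0"
    using relatively_close_subseq[OF assms(8) r] unfolding relatively_close_def by (simp add: o_def)
  then have "(\<lambda>i. u (r i) /\<^sub>R norm (v (r i)) - v (r i) /\<^sub>R norm (v (r i))) \<longlonglongrightarrow> 0"
    by (rule Lim_null_comparison[rotated])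
      (simp add: norm_minus_commute divide_inverse_commute flip: scaleR_diff_right)
  from tendsto_add[OF this w] have "(\<lambda>i. u (r i) /\<^sub>R norm (v (r i))) \<longlonglongrightarrow> w"
    by simp
  then have "w \<in> U"
    by (rule closed_cone_scaled_limit[OF assms(1,2) assms(5), rotated]) simp
  have "relatively_close (v \<circ> r) (\<lambda>i. norm (v (r i)) *\<^sub>R w)"
  proof -
    have "v (r i) - norm (v (r i)) *\<^sub>R w = norm (v (r i)) *\<^sub>R (v (r i) /\<^sub>R norm (v (r i)) - w)" for i
      using assms(7) by (simp add: scaleR_diff_right)
    then have "norm (v (r i) - norm (v (r i)) *\<^sub>R w) / norm (v (r i)) = norm (v (r i) /\<^sub>R norm (v (r i)) - w)" for i
      using assms(7) by simp
    then show ?thesis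
      using tendsto_norm_zero[OF LIM_zero[OF w]] unfolding relatively_close_def by (simp add: o_def)
  qed
  with \<open>w \<in> U\<close> \<open>w \<in> V\<close> \<open>norm w = 1\<close> r show thesis
    by (intro that) auto
qed

lemma image_sequence_preimage:
  assumes "\<And>i. y i \<in> f ` S"
  obtains x where "\<And>i. x i \<in> S" "\<And>i. f (x i) = y i"
proof -
  have "\<forall>i. \<exists>x. x \<in> S \<and> f x = y i"
    using assms by (metis imageE)
  then show thesis
    using that by (metis choice)
qed

lemma bi_lipschitz_germ_norm_bounds:
  assumes "bi_lipschitz_germ h \<delta> K1 K2" and "x \<in> ball 0 \<delta>"
  shows "K1 * norm x \<le> norm (h x)" and "norm (h x) \<le> K2 * norm x"
  using assms unfolding bi_lipschitz_germ_def by (metis centre_in_ball diff_zero)+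

lemma bi_lipschitz_germ_eq_0_iff:
  assumes "bi_lipschitz_germ h \<delta> K1 K2" and "x \<in> ball 0 \<delta>"
  shows "h x = 0 \<longleftrightarrow> x = 0"
  using bi_lipschitz_germ_norm_bounds[OF assms] assms(1) unfolding bi_lipschitz_germ_def
  by (metis mult_le_0_iff norm_eq_zero norm_ge_zero not_less order_antisym)

lemma bi_lipschitz_germ_relatively_close_image:
  assumes bl: "bi_lipschitz_germ h \<delta> K1 K2"
    and "\<And>i. v i \<in> ball 0 \<delta>" and "\<And>i. z i \<in> ball 0 \<delta>" and "\<And>i. v i \<noteq> 0"
    and "relatively_close v z"
  shows "relatively_close (h \<circ> v) (h \<circ> z)"
proof (rule relatively_close_comparison[OF assms(5)])
  fix i
  have K: "0 < K1" "K1 \<le> K2" and lip: "norm (h (v i) - h (z i)) \<le> K2 * norm (v i - z i)"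
    using bl assms(2,3) unfolding bi_lipschitz_germ_def by auto
  have "norm (h (v i) - h (z i)) / norm (h (v i)) \<le> K2 * norm (v i - z i) / (K1 * norm (v i))"
    using lip bi_lipschitz_germ_norm_bounds(1)[OF bl assms(2)] K assms(4)
    by (intro frac_le) auto
  then show "norm ((h \<circ> v) i - (h \<circ> z) i) / norm ((h \<circ> v) i) \<le> K2 / K1 * (norm (v i - z i) / norm (v i))"
    by simp
qed

lemma bi_lipschitz_germ_relatively_close_preimage:
  assumes bl: "bi_lipschitz_germ h \<delta> K1 K2"
    and "\<And>i. v i \<in> ball 0 \<delta>" and "\<And>i. u i \<in> ball 0 \<delta>" and "\<And>i. v i \<noteq> 0"
    and "relatively_close (h \<circ> v) (h \<circ> u)"
  shows "relatively_close v u"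
proof (rule relatively_close_comparison[OF assms(5)])
  fix i
  have K: "0 < K1" "K1 \<le> K2" and lip: "K1 * norm (v i - u i) \<le> norm (h (v i) - h (u i))"
    using bl assms(2,3) unfolding bi_lipschitz_germ_def by auto
  have "norm (v i - u i) / norm (v i) \<le> (norm (h (v i) - h (u i)) / K1) / (norm (h (v i)) / K2)"
  proof (rule frac_le)
    show "norm (v i - u i) \<le> norm (h (v i) - h (u i)) / K1"
      using lip K by (simp add: field_simps)
    show "0 < norm (h (v i)) / K2"
      using bi_lipschitz_germ_eq_0_iff[OF bl assms(2)] assms(4) K by simp
    show "norm (h (v i)) / K2 \<le> norm (v i)"
      using bi_lipschitz_germ_norm_bounds(2)[OF bl assms(2)] K by (simp add: field_simps)
  qed (use K in simp)
  then show "norm (v i - u i) / norm (v i) \<le> K2 / K1 * (norm ((h \<circ> v) i - (h \<circ> u) i) / norm ((h \<circ> v) i))"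
    by (simp add: field_simps)
qed

lemma SSP_relatively_close:
  assumes "SSP A" and "y \<longlonglongrightarrow> 0" and "(\<lambda>i. y i /\<^sub>R norm (y i)) \<longlonglongrightarrow> a" and "a \<in> tangent_dirs A"
  obtains b where "\<And>i. b i \<in> A" "relatively_close y b"
proof -
  have "\<exists>d\<in>tangent_dirs A. (\<lambda>i. y i /\<^sub>R norm (y i)) \<longlonglongrightarrow> d"
    using assms(3,4) by blast
  then show thesis
    using assms(1)[unfolded SSP_def, rule_format, OF conjI[OF assms(2)]] that
    unfolding relatively_close_def by blast
qed

lemma tangent_dirs_image_closed_cones_Int:
  fixes h :: "'a::euclidean_space \<Rightarrow> 'a"
  assumes bl: "bi_lipschitz_germ h \<delta> K1 K2"
    and cones: "closed U" "is_cone U" "closed V" "is_cone V"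
    and y: "\<And>i. y i \<in> h ` (V \<inter> ball 0 \<delta>) - {0}" "y \<longlonglongrightarrow> 0"
      "(\<lambda>i. y i /\<^sub>R norm (y i)) \<longlonglongrightarrow> a" "norm a = 1"
    and b: "\<And>i. b i \<in> h ` (U \<inter> ball 0 \<delta>)" "relatively_close y b"
  shows "a \<in> tangent_dirs (h ` (U \<inter> V \<inter> ball 0 \<delta>))"
proof -
  obtain v where v: "\<And>i. v i \<in> V \<inter> ball 0 \<delta>" "\<And>i. h (v i) = y i"
    by (rule image_sequence_preimage[of y h]) (use y(1) in blast)+
  obtain u where u: "\<And>i. u i \<in> U \<inter> ball 0 \<delta>" "\<And>i. h (u i) = b i"
    by (rule image_sequence_preimage[of b h, OF b(1)]) blast
  have v_nz: "v i \<noteq> 0" for i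
    using bi_lipschitz_germ_eq_0_iff[OF bl, of "v i"] v[of i] y(1)[of i] by auto
  have "h \<circ> v = y" "h \<circ> u = b"
    using v(2) u(2) by auto
  then have "relatively_close v u"
    using bi_lipschitz_germ_relatively_close_preimage[OF bl _ _ v_nz] b(2) u(1) v(1) by simp
  then obtain w r where w: "w \<in> U \<inter> V" "norm w = 1" and r: "strict_mono r"
    and close_vw: "relatively_close (v \<circ> r) (\<lambda>i. norm (v (r i)) *\<^sub>R w)"
    using closed_cones_common_direction[OF cones] u(1) v(1) v_nz by blast
  define z where "z i = norm (v (r i)) *\<^sub>R w" for i
  have z: "z i \<in> U \<inter> V \<inter> ball 0 \<delta>" "z i \<noteq> 0" for i
    using w cones(2,4) v(1)[of "r i"] v_nz[of "r i"] unfolding z_def is_cone_def by auto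
  have "relatively_close (h \<circ> (v \<circ> r)) (h \<circ> z)"
    using bi_lipschitz_germ_relatively_close_image[OF bl _ _ _ close_vw[folded z_def]] v(1) v_nz z
    by auto
  then have "relatively_close (y \<circ> r) (h \<circ> z)"
    using \<open>h \<circ> v = y\<close> by (simp add: comp_assoc[symmetric])
  moreover have "h (z i) \<noteq> 0" for i
    using bi_lipschitz_germ_eq_0_iff[OF bl] z by auto
  moreover have "(y \<circ> r) \<longlonglongrightarrow> 0" "(\<lambda>i. y (r i) /\<^sub>R norm (y (r i))) \<longlonglongrightarrow> a"
    using LIMSEQ_subseq_LIMSEQ[OF y(2) r] LIMSEQ_subseq_LIMSEQ[OF y(3) r] by (simp_all add: o_def)
  ultimately show ?thesis
    using tangent_dirs_relatively_close[where p = "y \<circ> r" and q = "h \<circ> z"] y(1,4) z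
    by simp
qed

theorem proposition2p29:
  fixes h :: "'a::euclidean_space \<Rightarrow> 'a" and U V :: "'a set" and \<delta> K1 K2 :: real
  assumes "bi_lipschitz_germ h \<delta> K1 K2"
    and "closed U" and "is_cone U" and "closed V" and "is_cone V"
    and "SSP (h ` (U \<inter> ball 0 \<delta>))"
  shows "tangent_dirs (h ` (U \<inter> V \<inter> ball 0 \<delta>)) =
         tangent_dirs (h ` (U \<inter> ball 0 \<delta>)) \<inter> tangent_dirs (h ` (V \<inter> ball 0 \<delta>))"
proof
  show "tangent_dirs (h ` (U \<inter> V \<inter> ball 0 \<delta>)) \<subseteq>
      tangent_dirs (h ` (U \<inter> ball 0 \<delta>)) \<inter> tangent_dirs (h ` (V \<inter> ball 0 \<delta>))"
    by (intro Int_greatest tangent_dirs_mono image_mono) auto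
  show "tangent_dirs (h ` (U \<inter> ball 0 \<delta>)) \<inter> tangent_dirs (h ` (V \<inter> ball 0 \<delta>))
      \<subseteq> tangent_dirs (h ` (U \<inter> V \<inter> ball 0 \<delta>))"
  proof
    fix a
    assume a: "a \<in> tangent_dirs (h ` (U \<inter> ball 0 \<delta>)) \<inter> tangent_dirs (h ` (V \<inter> ball 0 \<delta>))"
    then obtain y where y: "\<And>i. y i \<in> h ` (V \<inter> ball 0 \<delta>) - {0}" "y \<longlonglongrightarrow> 0"
      "(\<lambda>i. y i /\<^sub>R norm (y i)) \<longlonglongrightarrow> a" "norm a = 1"
      unfolding tangent_dirs_def by blast
    moreover obtain b where "\<And>i. b i \<in> h ` (U \<inter> ball 0 \<delta>)" "relatively_close y b"
      using SSP_relatively_close[OF assms(6) y(2,3)] a by blast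
    ultimately show "a \<in> tangent_dirs (h ` (U \<inter> V \<inter> ball 0 \<delta>))"
      by (rule tangent_dirs_image_closed_cones_Int[OF assms(1-5)])
  qed
qed

end
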